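(* Let $G=\mathbb{Z}_2\times\mathbb{Z}_4$ and let $\theta_1,\theta_2$ be normalised orthomorphisms of $G$, with associated sets $A_{ij}$ (for $\theta_1$) and $A'_{ij}$ (for $\theta_2$). Write $\delta(g)=\theta_1(g)^{-1}\theta_2(g)$. Then $\theta_1\perp\theta_2$ if and only if (a) the sets $\delta(A_{44}\cap A'_{44})$, $\delta(A_{24}\cap A'_{24})$, $\delta(A_{42}\cap A'_{42})$, $\delta(A_{22}\cap A'_{22})$ are pairwise disjoint and their union is $\{g\in G: o(g)=2\}$, and (b) the sets $\delta(A_{44}\cap A'_{42})$, $\delta(A_{42}\cap A'_{44})$, $\delta(A_{24}\cap A'_{22})$, $\delta(A_{22}\cap A'_{24})$ are pairwise disjoint and their union is $\{g\in G: o(g)=4\}$.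
   Context: $G$ is written multiplicatively with identity $e$; $o(g)$ is the order of $g$. A normalised orthomorphism of $G$ is a bijection $\theta\colon G\to G$ with $\theta(e)=e$ such that $x\mapsto x^{-1}\theta(x)$ is a bijection of $G$. Two orthomorphisms are orthogonal, $\theta_1\perp\theta_2$, if $x\mapsto\theta_1(x)^{-1}\theta_2(x)$ is a bijection of $G$. For an orthomorphism $\theta$: $A_{44}=\{x: o(x)=4, o(\theta(x))=4\}$, $A_{42}=\{x: o(x)=4, o(\theta(x))=2\}$, $A_{24}=\{x: o(x)=2, o(\theta(x))=4\}$, $A_{22}=\{x: o(x)=2, o(\theta(x))=2\}$; $A_{ij}$ are these sets for $\theta_1$ and $A'_{ij}$ those for $\theta_2$. *)

theory Defs
  imports "HOL-Algebra.Multiplicative_Group" "HOL-Algebra.Elementary_Groups"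
begin

definition normalised_orthomorphism :: "('a, 'b) monoid_scheme \<Rightarrow> ('a \<Rightarrow> 'a) \<Rightarrow> bool" where
  "normalised_orthomorphism G \<theta> \<longleftrightarrow>
     bij_betw \<theta> (carrier G) (carrier G) \<and> \<theta> \<one>\<^bsub>G\<^esub> = \<one>\<^bsub>G\<^esub> \<and>
     bij_betw (\<lambda>x. inv\<^bsub>G\<^esub> x \<otimes>\<^bsub>G\<^esub> \<theta> x) (carrier G) (carrier G)"

definition orth_perp :: "('a, 'b) monoid_scheme \<Rightarrow> ('a \<Rightarrow> 'a) \<Rightarrow> ('a \<Rightarrow> 'a) \<Rightarrow> bool" where
  "orth_perp G \<theta>1 \<theta>2 \<longleftrightarrow>
     bij_betw (\<lambda>x. inv\<^bsub>G\<^esub> (\<theta>1 x) \<otimes>\<^bsub>G\<^esub> \<theta>2 x) (carrier G) (carrier G)"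

definition Aset :: "('a, 'b) monoid_scheme \<Rightarrow> ('a \<Rightarrow> 'a) \<Rightarrow> nat \<Rightarrow> nat \<Rightarrow> 'a set" where
  "Aset G \<theta> i j = {x \<in> carrier G. group.ord G x = i \<and> group.ord G (\<theta> x) = j}"

definition odelta :: "('a, 'b) monoid_scheme \<Rightarrow> ('a \<Rightarrow> 'a) \<Rightarrow> ('a \<Rightarrow> 'a) \<Rightarrow> 'a \<Rightarrow> 'a" where
  "odelta G \<theta>1 \<theta>2 g = inv\<^bsub>G\<^esub> (\<theta>1 g) \<otimes>\<^bsub>G\<^esub> \<theta>2 g"

definition disjoint_union4 :: "'a set \<Rightarrow> 'a set \<Rightarrow> 'a set \<Rightarrow> 'a set \<Rightarrow> 'a set \<Rightarrow> bool" where
  "disjoint_union4 S1 S2 S3 S4 U \<longleftrightarrow>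
     S1 \<inter> S2 = {} \<and> S1 \<inter> S3 = {} \<and> S1 \<inter> S4 = {} \<and>
     S2 \<inter> S3 = {} \<and> S2 \<inter> S4 = {} \<and> S3 \<inter> S4 = {} \<and>
     S1 \<union> S2 \<union> S3 \<union> S4 = U"

definition Z2Z4 :: "(int \<times> int) monoid" where
  "Z2Z4 = integer_mod_group 2 \<times>\<times> integer_mod_group 4"

end

theory Submission
  imports Defs
begin

text \<open>In \<open>\<int>\<^sub>2 \<times> \<int>\<^sub>4\<close> an element has order 4 exactly when its second coordinate is
  odd, and every other non-identity element has order 2. So \<open>o(g\<inverse>h) = 4\<close> iff exactly one
  of \<open>g, h\<close> has order 4, and for \<open>x \<noteq> e\<close> the element \<open>\<delta>(x)\<close> has order 4 iff
  exactly one of \<open>\<theta>\<^sub>1(x)\<close>, \<open>\<theta>\<^sub>2(x)\<close> has order 4: the four sets in (a) partition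
  those \<open>x \<noteq> e\<close> with \<open>o(\<delta>(x)) \<noteq> 4\<close>, the four sets in (b) those with \<open>o(\<delta>(x)) = 4\<close>.
  A bijective \<open>\<delta>\<close> fixes \<open>e\<close>, hence maps these two halves onto the elements of order 2
  and 4, and injectivity keeps the images disjoint. Conversely (a) and (b) make \<open>\<delta>\<close>
  surjective, hence bijective on the finite group.\<close>

lemma disjoint_union4_image:
  assumes "inj_on f C" "S1 \<subseteq> C" "S2 \<subseteq> C" "S3 \<subseteq> C" "S4 \<subseteq> C"
    and "S1 \<inter> S2 = {}" "S1 \<inter> S3 = {}" "S1 \<inter> S4 = {}"
    and "S2 \<inter> S3 = {}" "S2 \<inter> S4 = {}" "S3 \<inter> S4 = {}"
  shows "disjoint_union4 (f ` S1) (f ` S2) (f ` S3) (f ` S4) (f ` (S1 \<union> S2 \<union> S3 \<union> S4))"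
proof -
  have img: "f ` A \<inter> f ` B = {}" if "A \<subseteq> C" "B \<subseteq> C" "A \<inter> B = {}" for A B
    using that assms(1) unfolding inj_on_def by blast
  show ?thesis
    unfolding disjoint_union4_def image_Un using img assms(2-) by simp
qed

lemma disjoint_union4_union:
  "disjoint_union4 S1 S2 S3 S4 U \<Longrightarrow> S1 \<union> S2 \<union> S3 \<union> S4 = U"
  unfolding disjoint_union4_def by blast

lemma bij_betw_image_Collect:
  "bij_betw f C C \<Longrightarrow> f ` {x \<in> C. P (f x)} = {y \<in> C. P y}"
  unfolding bij_betw_def by auto

lemma Aset_inter_disjoint:
  "(i, j, l) \<noteq> (i', j', l') \<Longrightarrow>
    (Aset G \<theta> i j \<inter> Aset G \<theta>' k l) \<inter> (Aset G \<theta> i' j' \<inter> Aset G \<theta>' k' l') = {}"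
  unfolding Aset_def by auto

lemma Aset_subset_carrier: "Aset G \<theta> i j \<subseteq> carrier G"
  unfolding Aset_def by auto

context group
begin

lemma normalised_orthomorphism_eq_one_iff:
  assumes "normalised_orthomorphism G \<theta>" "x \<in> carrier G"
  shows "\<theta> x = \<one> \<longleftrightarrow> x = \<one>"
  using assms unfolding normalised_orthomorphism_def bij_betw_def inj_on_def
  by (metis one_closed)

lemma normalised_orthomorphism_closed:
  "normalised_orthomorphism G \<theta> \<Longrightarrow> x \<in> carrier G \<Longrightarrow> \<theta> x \<in> carrier G"
  unfolding normalised_orthomorphism_def bij_betw_def by blast

lemma odelta_closed:
  "normalised_orthomorphism G \<theta>1 \<Longrightarrow> normalised_orthomorphism G \<theta>2 \<Longrightarrow> x \<in> carrier G \<Longrightarrow>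
    odelta G \<theta>1 \<theta>2 x \<in> carrier G"
  unfolding odelta_def by (simp add: normalised_orthomorphism_closed)

lemma odelta_one:
  "normalised_orthomorphism G \<theta>1 \<Longrightarrow> normalised_orthomorphism G \<theta>2 \<Longrightarrow> odelta G \<theta>1 \<theta>2 \<one> = \<one>"
  unfolding odelta_def normalised_orthomorphism_def by simp

lemma orth_perp_iff_bij_odelta:
  "orth_perp G \<theta>1 \<theta>2 \<longleftrightarrow> bij_betw (odelta G \<theta>1 \<theta>2) (carrier G) (carrier G)"
  unfolding orth_perp_def odelta_def ..

end

text \<open>The hypotheses say that \<open>G\<close> has exponent dividing 4 and that its elements of order
  at most 2 form a subgroup of index at most 2, the elements of order 4 being the other coset.\<close>

locale ord4_parity_group = group +
  assumes finite_carrier: "finite (carrier G)"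
    and ord_cases: "x \<in> carrier G \<Longrightarrow> group.ord G x \<in> {1, 2, 4}"
    and ord_inv_mult_eq_4: "g \<in> carrier G \<Longrightarrow> h \<in> carrier G \<Longrightarrow>
      group.ord G (inv g \<otimes> h) = 4 \<longleftrightarrow> (group.ord G g = 4) \<noteq> (group.ord G h = 4)"
begin

lemma ord_eq_2_or_4: "x \<in> carrier G \<Longrightarrow> x \<noteq> \<one> \<Longrightarrow> ord x = 2 \<or> ord x = 4"
  using ord_cases[of x] ord_eq_1[of x] by auto

context
  fixes \<theta>1 \<theta>2
  assumes \<theta>1: "normalised_orthomorphism G \<theta>1" and \<theta>2: "normalised_orthomorphism G \<theta>2"
begin

abbreviation "\<delta> \<equiv> odelta G \<theta>1 \<theta>2"
abbreviation "A \<equiv> Aset G \<theta>1"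
abbreviation "A' \<equiv> Aset G \<theta>2"

lemma ord_odelta_eq_4:
  "x \<in> carrier G \<Longrightarrow> ord (\<delta> x) = 4 \<longleftrightarrow> (ord (\<theta>1 x) = 4) \<noteq> (ord (\<theta>2 x) = 4)"
  unfolding odelta_def
  by (simp add: ord_inv_mult_eq_4 normalised_orthomorphism_closed \<theta>1 \<theta>2)

lemma ord_eq_2_or_4_images:
  assumes "x \<in> carrier G" "x \<noteq> \<one>"
  shows "ord x = 2 \<or> ord x = 4" "ord (\<theta>1 x) = 2 \<or> ord (\<theta>1 x) = 4" "ord (\<theta>2 x) = 2 \<or> ord (\<theta>2 x) = 4"
  using assms ord_eq_2_or_4 normalised_orthomorphism_closed normalised_orthomorphism_eq_one_iff \<theta>1 \<theta>2
  by auto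

lemma Aset_order_preserving_union:
  "A 4 4 \<inter> A' 4 4 \<union> A 2 4 \<inter> A' 2 4 \<union> A 4 2 \<inter> A' 4 2 \<union> A 2 2 \<inter> A' 2 2 =
    {x \<in> carrier G. x \<noteq> \<one> \<and> ord (\<delta> x) \<noteq> 4}"
  (is "?S = ?E")
proof
  show "?S \<subseteq> ?E"
  proof
    fix x assume "x \<in> ?S"
    then have "x \<in> carrier G" "ord x \<noteq> 1" "(ord (\<theta>1 x) = 4) = (ord (\<theta>2 x) = 4)"
      unfolding Aset_def by auto
    then show "x \<in> ?E"
      using ord_odelta_eq_4 by auto
  qed
  show "?E \<subseteq> ?S"
  proof
    fix x assume "x \<in> ?E"
    then have x: "x \<in> carrier G" "x \<noteq> \<one>" "(ord (\<theta>1 x) = 4) = (ord (\<theta>2 x) = 4)"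
      by (auto simp: ord_odelta_eq_4)
    from ord_eq_2_or_4_images[OF x(1,2)] show "x \<in> ?S"
      using x unfolding Aset_def by (elim disjE) simp_all
  qed
qed

lemma Aset_order_changing_union:
  "A 4 4 \<inter> A' 4 2 \<union> A 4 2 \<inter> A' 4 4 \<union> A 2 4 \<inter> A' 2 2 \<union> A 2 2 \<inter> A' 2 4 =
    {x \<in> carrier G. ord (\<delta> x) = 4}"
  (is "?S = ?F")
proof
  show "?S \<subseteq> ?F"
  proof
    fix x assume "x \<in> ?S"
    then have "x \<in> carrier G" "(ord (\<theta>1 x) = 4) \<noteq> (ord (\<theta>2 x) = 4)"
      unfolding Aset_def by auto
    then show "x \<in> ?F"
      using ord_odelta_eq_4 by auto
  qed
  show "?F \<subseteq> ?S"
  proof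
    fix x assume "x \<in> ?F"
    then have x: "x \<in> carrier G" "x \<noteq> \<one>" "(ord (\<theta>1 x) = 4) \<noteq> (ord (\<theta>2 x) = 4)"
      using odelta_one[OF \<theta>1 \<theta>2] by (auto simp: ord_odelta_eq_4)
    from ord_eq_2_or_4_images[OF x(1,2)] show "x \<in> ?S"
      using x unfolding Aset_def by (elim disjE) simp_all
  qed
qed

lemma odelta_eq_one_iff:
  assumes "bij_betw \<delta> (carrier G) (carrier G)" "x \<in> carrier G"
  shows "\<delta> x = \<one> \<longleftrightarrow> x = \<one>"
  using assms odelta_one[OF \<theta>1 \<theta>2] unfolding bij_betw_def inj_on_def by (metis one_closed)

lemma bij_odelta_partitions:
  assumes bij: "bij_betw \<delta> (carrier G) (carrier G)"
  shows "disjoint_union4 (\<delta> ` (A 4 4 \<inter> A' 4 4)) (\<delta> ` (A 2 4 \<inter> A' 2 4))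
      (\<delta> ` (A 4 2 \<inter> A' 4 2)) (\<delta> ` (A 2 2 \<inter> A' 2 2)) {g \<in> carrier G. ord g = 2}"
    and "disjoint_union4 (\<delta> ` (A 4 4 \<inter> A' 4 2)) (\<delta> ` (A 4 2 \<inter> A' 4 4))
      (\<delta> ` (A 2 4 \<inter> A' 2 2)) (\<delta> ` (A 2 2 \<inter> A' 2 4)) {g \<in> carrier G. ord g = 4}"
proof -
  have inj: "inj_on \<delta> (carrier G)"
    using bij bij_betw_def by blast
  have sub: "A i j \<inter> A' k l \<subseteq> carrier G" for i j k l
    using Aset_subset_carrier[of G \<theta>1 i j] by blast
  have "{x \<in> carrier G. x \<noteq> \<one> \<and> ord (\<delta> x) \<noteq> 4} = {x \<in> carrier G. ord (\<delta> x) = 2}"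
    using odelta_eq_one_iff[OF bij] odelta_closed[OF \<theta>1 \<theta>2] ord_cases ord_eq_1 by fastforce
  then have image_2: "\<delta> ` (A 4 4 \<inter> A' 4 4 \<union> A 2 4 \<inter> A' 2 4 \<union> A 4 2 \<inter> A' 4 2 \<union> A 2 2 \<inter> A' 2 2) =
      {g \<in> carrier G. ord g = 2}"
    unfolding Aset_order_preserving_union using bij_betw_image_Collect[OF bij, of "\<lambda>y. ord y = 2"]
    by simp
  show "disjoint_union4 (\<delta> ` (A 4 4 \<inter> A' 4 4)) (\<delta> ` (A 2 4 \<inter> A' 2 4))
      (\<delta> ` (A 4 2 \<inter> A' 4 2)) (\<delta> ` (A 2 2 \<inter> A' 2 2)) {g \<in> carrier G. ord g = 2}"
    unfolding image_2[symmetric]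
    by (intro disjoint_union4_image[OF inj] sub Aset_inter_disjoint) simp_all
  have image_4: "\<delta> ` (A 4 4 \<inter> A' 4 2 \<union> A 4 2 \<inter> A' 4 4 \<union> A 2 4 \<inter> A' 2 2 \<union> A 2 2 \<inter> A' 2 4) =
      {g \<in> carrier G. ord g = 4}"
    unfolding Aset_order_changing_union by (rule bij_betw_image_Collect[OF bij])
  show "disjoint_union4 (\<delta> ` (A 4 4 \<inter> A' 4 2)) (\<delta> ` (A 4 2 \<inter> A' 4 4))
      (\<delta> ` (A 2 4 \<inter> A' 2 2)) (\<delta> ` (A 2 2 \<inter> A' 2 4)) {g \<in> carrier G. ord g = 4}"
    unfolding image_4[symmetric]
    by (intro disjoint_union4_image[OF inj] sub Aset_inter_disjoint) simp_all
qed

lemma bij_odelta_of_partitions: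
  assumes "disjoint_union4 (\<delta> ` (A 4 4 \<inter> A' 4 4)) (\<delta> ` (A 2 4 \<inter> A' 2 4))
      (\<delta> ` (A 4 2 \<inter> A' 4 2)) (\<delta> ` (A 2 2 \<inter> A' 2 2)) {g \<in> carrier G. ord g = 2}"
    and "disjoint_union4 (\<delta> ` (A 4 4 \<inter> A' 4 2)) (\<delta> ` (A 4 2 \<inter> A' 4 4))
      (\<delta> ` (A 2 4 \<inter> A' 2 2)) (\<delta> ` (A 2 2 \<inter> A' 2 4)) {g \<in> carrier G. ord g = 4}"
  shows "bij_betw \<delta> (carrier G) (carrier G)"
proof -
  have "{g \<in> carrier G. ord g = 2} = \<delta> ` {x \<in> carrier G. x \<noteq> \<one> \<and> ord (\<delta> x) \<noteq> 4}"
    using disjoint_union4_union[OF assms(1), folded image_Un, unfolded Aset_order_preserving_union]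
    by simp
  moreover have "{g \<in> carrier G. ord g = 4} = \<delta> ` {x \<in> carrier G. ord (\<delta> x) = 4}"
    using disjoint_union4_union[OF assms(2), folded image_Un, unfolded Aset_order_changing_union]
    by simp
  ultimately have "{g \<in> carrier G. ord g = 2} \<union> {g \<in> carrier G. ord g = 4} \<subseteq> \<delta> ` carrier G"
    by auto
  moreover have "\<one> \<in> \<delta> ` carrier G"
    using odelta_one[OF \<theta>1 \<theta>2] by force
  ultimately have surj: "carrier G \<subseteq> \<delta> ` carrier G"
    using ord_eq_2_or_4 by blast
  have "inj_on \<delta> (carrier G)"
    using finite_surj_inj[OF finite_carrier surj] .
  moreover have "\<delta> ` carrier G \<subseteq> carrier G"
    using odelta_closed[OF \<theta>1 \<theta>2] by blast
  ultimately show ?thesis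
    using surj unfolding bij_betw_def by blast
qed

end

theorem orth_perp_iff_partitions:
  assumes "normalised_orthomorphism G \<theta>1" "normalised_orthomorphism G \<theta>2"
  shows "orth_perp G \<theta>1 \<theta>2 \<longleftrightarrow>
    (let \<delta> = odelta G \<theta>1 \<theta>2; A = Aset G \<theta>1; A' = Aset G \<theta>2 in
      disjoint_union4 (\<delta> ` (A 4 4 \<inter> A' 4 4)) (\<delta> ` (A 2 4 \<inter> A' 2 4))
                      (\<delta> ` (A 4 2 \<inter> A' 4 2)) (\<delta> ` (A 2 2 \<inter> A' 2 2))
                      {g \<in> carrier G. ord g = 2}
    \<and> disjoint_union4 (\<delta> ` (A 4 4 \<inter> A' 4 2)) (\<delta> ` (A 4 2 \<inter> A' 4 4))
                      (\<delta> ` (A 2 4 \<inter> A' 2 2)) (\<delta> ` (A 2 2 \<inter> A' 2 4))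
                      {g \<in> carrier G. ord g = 4})"
  unfolding Let_def orth_perp_iff_bij_odelta
  using bij_odelta_partitions[OF assms] bij_odelta_of_partitions[OF assms] by blast

end

lemma pow_DirProd:
  "(g, h) [^]\<^bsub>G \<times>\<times> H\<^esub> (n::nat) = (g [^]\<^bsub>G\<^esub> n, h [^]\<^bsub>H\<^esub> n)"
  by (induction n) simp_all

lemma nat_dvd_4_cases: "d dvd (4::nat) \<Longrightarrow> d \<in> {1, 2, 4}"
proof -
  assume d: "d dvd 4"
  then have "d \<le> 4" by (simp add: dvd_imp_le)
  then have "d \<in> {0, 1, 2, 3, 4}" by auto
  with d show ?thesis by auto
qed

lemma (in group) ord_cases_of_pow_4:
  assumes "x \<in> carrier G" "x [^] (4::nat) = \<one>"
  shows "ord x \<in> {1, 2, 4}" and "ord x = 4 \<longleftrightarrow> x [^] (2::nat) \<noteq> \<one>"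
proof -
  show "ord x \<in> {1, 2, 4}"
    using assms pow_eq_id nat_dvd_4_cases by blast
  then show "ord x = 4 \<longleftrightarrow> x [^] (2::nat) \<noteq> \<one>"
    using assms(1) pow_eq_id by auto
qed

lemma group_Z2Z4: "group Z2Z4"
  unfolding Z2Z4_def by (simp add: DirProd_group)

lemma carrier_Z2Z4: "carrier Z2Z4 = {0..<2} \<times> {0..<4}"
  unfolding Z2Z4_def by (simp add: carrier_integer_mod_group)

lemma one_Z2Z4: "\<one>\<^bsub>Z2Z4\<^esub> = (0, 0)"
  unfolding Z2Z4_def by simp

lemma pow_Z2Z4: "(a, b) [^]\<^bsub>Z2Z4\<^esub> (n::nat) = ((int n * a) mod 2, (int n * b) mod 4)"
  unfolding Z2Z4_def pow_DirProd by simp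

lemma inv_mult_Z2Z4:
  assumes "(a, b) \<in> carrier Z2Z4" "(c, d) \<in> carrier Z2Z4"
  shows "inv\<^bsub>Z2Z4\<^esub> (a, b) \<otimes>\<^bsub>Z2Z4\<^esub> (c, d) = (((- a) mod 2 + c) mod 2, ((- b) mod 4 + d) mod 4)"
  using assms unfolding Z2Z4_def by (simp add: carrier_integer_mod_group)

lemma ord_Z2Z4:
  assumes "(a, b) \<in> carrier Z2Z4"
  shows "group.ord Z2Z4 (a, b) \<in> {1, 2, 4}" and "group.ord Z2Z4 (a, b) = 4 \<longleftrightarrow> odd b"
proof -
  interpret group Z2Z4 by (rule group_Z2Z4)
  have pow_4: "(a, b) [^]\<^bsub>Z2Z4\<^esub> (4::nat) = \<one>\<^bsub>Z2Z4\<^esub>"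
    unfolding pow_Z2Z4 one_Z2Z4 by simp
  have pow_2: "(a, b) [^]\<^bsub>Z2Z4\<^esub> (2::nat) = \<one>\<^bsub>Z2Z4\<^esub> \<longleftrightarrow> even b"
    unfolding pow_Z2Z4 one_Z2Z4 by simp presburger
  show "ord (a, b) \<in> {1, 2, 4}" "ord (a, b) = 4 \<longleftrightarrow> odd b"
    using ord_cases_of_pow_4[OF assms pow_4] pow_2 by simp_all
qed

lemma ord_inv_mult_Z2Z4:
  assumes "g \<in> carrier Z2Z4" "h \<in> carrier Z2Z4"
  shows "group.ord Z2Z4 (inv\<^bsub>Z2Z4\<^esub> g \<otimes>\<^bsub>Z2Z4\<^esub> h) = 4 \<longleftrightarrow>
    (group.ord Z2Z4 g = 4) \<noteq> (group.ord Z2Z4 h = 4)"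
proof -
  obtain a b c d where gh: "g = (a, b)" "h = (c, d)"
    by (cases g, cases h)
  let ?q = "(((- a) mod 2 + c) mod 2, ((- b) mod 4 + d) mod 4)"
  have "inv\<^bsub>Z2Z4\<^esub> g \<otimes>\<^bsub>Z2Z4\<^esub> h = ?q"
    using assms unfolding gh by (rule inv_mult_Z2Z4)
  moreover have "?q \<in> carrier Z2Z4"
    unfolding carrier_Z2Z4 by simp
  moreover have "odd (((- b) mod 4 + d) mod 4) \<longleftrightarrow> odd b \<noteq> odd d"
    by presburger
  ultimately show ?thesis
    using assms ord_Z2Z4(2) unfolding gh by simp
qed

interpretation Z2Z4: ord4_parity_group Z2Z4
proof (intro ord4_parity_group.intro ord4_parity_group_axioms.intro group_Z2Z4)
  show "finite (carrier Z2Z4)"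
    unfolding carrier_Z2Z4 by simp
  show "group.ord Z2Z4 x \<in> {1, 2, 4}" if "x \<in> carrier Z2Z4" for x
    using that ord_Z2Z4(1) by (cases x) simp
qed (rule ord_inv_mult_Z2Z4)

theorem lemma2:
  fixes \<theta>1 \<theta>2 :: "int \<times> int \<Rightarrow> int \<times> int"
  assumes "normalised_orthomorphism Z2Z4 \<theta>1"
    and "normalised_orthomorphism Z2Z4 \<theta>2"
  shows "orth_perp Z2Z4 \<theta>1 \<theta>2 \<longleftrightarrow>
    (let \<delta> = odelta Z2Z4 \<theta>1 \<theta>2; A = Aset Z2Z4 \<theta>1; A' = Aset Z2Z4 \<theta>2 in
      disjoint_union4 (\<delta> ` (A 4 4 \<inter> A' 4 4)) (\<delta> ` (A 2 4 \<inter> A' 2 4))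
                      (\<delta> ` (A 4 2 \<inter> A' 4 2)) (\<delta> ` (A 2 2 \<inter> A' 2 2))
                      {g \<in> carrier Z2Z4. group.ord Z2Z4 g = 2}
    \<and> disjoint_union4 (\<delta> ` (A 4 4 \<inter> A' 4 2)) (\<delta> ` (A 4 2 \<inter> A' 4 4))
                      (\<delta> ` (A 2 4 \<inter> A' 2 2)) (\<delta> ` (A 2 2 \<inter> A' 2 4))
                      {g \<in> carrier Z2Z4. group.ord Z2Z4 g = 4})"
  using Z2Z4.orth_perp_iff_partitions[OF assms] .

end
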